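(* Let $d\ge2$ and let $\mathbf{x}=(x_0,\dots,x_{d-1})\in\mathbb{R}^d$ with $x_i\ge 0$ for all $i$ and $\mathbf{x}\neq 0$. Define the operator on $\mathbb{C}^d\otimes\mathbb{C}^d$ $$I_{\mathbf{x}}=\frac{1}{\|\mathbf{x}\|_1^2}\left(\sum_{i=0}^{d-1}x_i^2\ket{ii}\bra{ii}+\sum_{0\le i<j<d}2x_ix_j\ket{D_{ij}}\bra{D_{ij}}\right),$$ where $\ket{D_{ij}}=(\ket{ij}+\ket{ji})/\sqrt2$ and $\|\mathbf{x}\|_1=\sum_i x_i$. Then $I_{\mathbf{x}}$ is a separable quantum state.
   Context: $\{\ket{0},\dots,\ket{d-1}\}$ denotes the computational basis of $\mathbb{C}^d$. A state is separable if it is a convex combination (possibly given by an integral over a probability measure) of product states $\rho^A\otimes\rho^B$. *)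

theory Defs
  imports "HOL-Analysis.Analysis"
begin

text \<open>Operators on the Hilbert space with orthonormal basis indexed by a finite set S
  are represented as matrices  'i => 'i => complex  (entries outside S are required to be 0).
  C^d has basis indexed by {..<d}; C^d (x) C^d has basis |ij> indexed by pairs (i,j).\<close>

definition density_on :: "'i set \<Rightarrow> ('i \<Rightarrow> 'i \<Rightarrow> complex) \<Rightarrow> bool" where
  "density_on S \<rho> \<longleftrightarrow>
     (\<forall>p q. p \<notin> S \<or> q \<notin> S \<longrightarrow> \<rho> p q = 0) \<and>
     (\<forall>p q. \<rho> q p = cnj (\<rho> p q)) \<and>
     (\<forall>v. Im (\<Sum>p\<in>S. \<Sum>q\<in>S. cnj (v p) * \<rho> p q * v q) = 0 \<and>
          Re (\<Sum>p\<in>S. \<Sum>q\<in>S. cnj (v p) * \<rho> p q * v q) \<ge> 0) \<and>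
     (\<Sum>p\<in>S. \<rho> p p) = 1"

definition tensor :: "(nat \<Rightarrow> nat \<Rightarrow> complex) \<Rightarrow> (nat \<Rightarrow> nat \<Rightarrow> complex)
    \<Rightarrow> (nat \<times> nat \<Rightarrow> nat \<times> nat \<Rightarrow> complex)" where
  "tensor \<rho> \<sigma> = (\<lambda>(i, k) (j, l). \<rho> i j * \<sigma> k l)"

definition separable :: "nat \<Rightarrow> (nat \<times> nat \<Rightarrow> nat \<times> nat \<Rightarrow> complex) \<Rightarrow> bool" where
  "separable d \<rho> \<longleftrightarrow>
     (\<exists>(n::nat) (w::nat \<Rightarrow> real) A B.
        (\<forall>k<n. w k \<ge> 0) \<and> (\<Sum>k<n. w k) = 1 \<and>
        (\<forall>k<n. density_on {..<d} (A k) \<and> density_on {..<d} (B k)) \<and>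
        \<rho> = (\<lambda>r s. \<Sum>k<n. complex_of_real (w k) * tensor (A k) (B k) r s))"

definition ket2 :: "nat \<Rightarrow> nat \<Rightarrow> nat \<times> nat \<Rightarrow> complex" where
  "ket2 i j = (\<lambda>(a, b). if a = i \<and> b = j then 1 else 0)"

definition Dket :: "nat \<Rightarrow> nat \<Rightarrow> nat \<times> nat \<Rightarrow> complex" where
  "Dket i j = (\<lambda>r. (ket2 i j r + ket2 j i r) / complex_of_real (sqrt 2))"

definition outer :: "('i \<Rightarrow> complex) \<Rightarrow> ('i \<Rightarrow> complex) \<Rightarrow> 'i \<Rightarrow> 'i \<Rightarrow> complex" where
  "outer u v = (\<lambda>p q. u p * cnj (v q))"

definition Iop :: "nat \<Rightarrow> (nat \<Rightarrow> real) \<Rightarrow> nat \<times> nat \<Rightarrow> nat \<times> nat \<Rightarrow> complex" where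
  "Iop d x = (\<lambda>r s. complex_of_real (1 / (\<Sum>i<d. x i)^2) *
      ((\<Sum>i<d. complex_of_real ((x i)^2) * outer (ket2 i i) (ket2 i i) r s)
     + (\<Sum>i<d. \<Sum>j\<in>{i<..<d}. complex_of_real (2 * x i * x j) * outer (Dket i j) (Dket i j) r s)))"

end

theory Submission
  imports Defs
begin

(* For f \<in> {0..3}^d let \<psi>_f be the unit vector with entries sqrt (x_a / |x|_1) \<i>^(f a).
   The entry of \<psi>_f\<psi>_f^* \<otimes> \<psi>_f\<psi>_f^* at (ab, ce) carries the phase \<i>^(f a + f b - f c - f e),
   whose average over all f is 1 if {a, b} = {c, e} as multisets and 0 otherwise. Hence the
   uniform average of these 4^d product states has exactly the entries of I_x, which is
   therefore a density operator and separable. *)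

lemma quadratic_form_sum_outer:
  fixes u :: "'f \<Rightarrow> 'i \<Rightarrow> complex"
  assumes "finite S" "finite F"
  shows "(\<Sum>p\<in>S. \<Sum>q\<in>S. cnj (v p) * (\<Sum>f\<in>F. of_real (w f) * outer (u f) (u f) p q) * v q)
       = of_real (\<Sum>f\<in>F. w f * (cmod (\<Sum>p\<in>S. cnj (v p) * u f p))^2)"
proof -
  have "(\<Sum>p\<in>S. \<Sum>q\<in>S. cnj (v p) * (\<Sum>f\<in>F. of_real (w f) * outer (u f) (u f) p q) * v q)
     = (\<Sum>f\<in>F. of_real (w f) * ((\<Sum>p\<in>S. cnj (v p) * u f p) * cnj (\<Sum>q\<in>S. cnj (v q) * u f q)))"
    by (simp add: outer_def sum_distrib_left sum_distrib_right sum_product sum.swap[of _ F] mult_ac)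
  also have "\<dots> = (\<Sum>f\<in>F. of_real (w f * (cmod (\<Sum>p\<in>S. cnj (v p) * u f p))^2))"
    by (intro sum.cong refl) (simp only: of_real_mult complex_norm_square)
  finally show ?thesis
    by simp
qed

lemma density_on_sum_outer:
  fixes u :: "'f \<Rightarrow> 'i \<Rightarrow> complex"
  assumes "finite S" "finite F" "\<And>f. f \<in> F \<Longrightarrow> w f \<ge> 0"
    and "\<And>f p. p \<notin> S \<Longrightarrow> u f p = 0"
    and "(\<Sum>f\<in>F. w f * (\<Sum>p\<in>S. (cmod (u f p))^2)) = 1"
  shows "density_on S (\<lambda>p q. \<Sum>f\<in>F. of_real (w f) * outer (u f) (u f) p q)"
proof -
  have "(\<Sum>f\<in>F. w f * (cmod (\<Sum>p\<in>S. cnj (v p) * u f p))^2) \<ge> 0" for v :: "'i \<Rightarrow> complex"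
    using assms(3) by (intro sum_nonneg) auto
  moreover have "(\<Sum>p\<in>S. \<Sum>f\<in>F. of_real (w f) * outer (u f) (u f) p p)
      = of_real (\<Sum>f\<in>F. w f * (\<Sum>p\<in>S. (cmod (u f p))^2))"
    by (subst sum.swap) (simp add: outer_def sum_distrib_left flip: complex_norm_square)
  ultimately show ?thesis
    using assms unfolding density_on_def quadratic_form_sum_outer[OF assms(1,2)]
    by (auto simp: outer_def mult_ac)
qed

lemma density_on_outer:
  assumes "finite S" "\<And>p. p \<notin> S \<Longrightarrow> u p = 0" "(\<Sum>p\<in>S. (cmod (u p))^2) = 1"
  shows "density_on S (outer u u)"
  using density_on_sum_outer[of S "{()}" "\<lambda>_. 1" "\<lambda>_. u"] assms by simp

lemma tensor_outer:
  "tensor (outer u u') (outer v v') = outer (\<lambda>(a, b). u a * v b) (\<lambda>(a, b). u' a * v' b)"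
  by (auto simp: tensor_def outer_def fun_eq_iff)

lemma density_on_sum_tensor_outer:
  assumes "finite F" "\<And>f. f \<in> F \<Longrightarrow> w f \<ge> 0" "(\<Sum>f\<in>F. w f) = 1"
    and "\<And>f a. a \<ge> d \<Longrightarrow> u f a = 0" "\<And>f a. a \<ge> d \<Longrightarrow> v f a = 0"
    and "\<And>f. (\<Sum>a<d. (cmod (u f a))^2) = 1" "\<And>f. (\<Sum>a<d. (cmod (v f a))^2) = 1"
  shows "density_on ({..<d} \<times> {..<d})
           (\<lambda>r s. \<Sum>f\<in>F. of_real (w f) * tensor (outer (u f) (u f)) (outer (v f) (v f)) r s)"
proof -
  have unit: "(\<Sum>p\<in>{..<d} \<times> {..<d}. (cmod (case p of (a, b) \<Rightarrow> u f a * v f b))^2) = 1" for f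
  proof -
    have "(\<Sum>p\<in>{..<d} \<times> {..<d}. (cmod (case p of (a, b) \<Rightarrow> u f a * v f b))^2)
        = (\<Sum>a<d. (cmod (u f a))^2) * (\<Sum>b<d. (cmod (v f b))^2)"
      by (simp add: sum.cartesian_product sum_product norm_mult power_mult_distrib case_prod_beta)
    then show ?thesis
      using assms(6,7) by simp
  qed
  have support: "(case p of (a, b) \<Rightarrow> u f a * v f b) = 0" if outside: "p \<notin> {..<d} \<times> {..<d}" for f p
  proof -
    obtain a b where "p = (a, b)" "a \<ge> d \<or> b \<ge> d"
      using outside by (cases p) (auto simp: not_less)
    then show ?thesis
      using assms(4,5) by auto
  qed
  show ?thesis
    unfolding tensor_outer
    by (rule density_on_sum_outer) (simp_all add: assms(1-3) unit support)
qed

lemma separable_sum_tensor: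
  assumes "finite F" "\<And>f. f \<in> F \<Longrightarrow> w f \<ge> 0" "(\<Sum>f\<in>F. w f) = 1"
    and "\<And>f. f \<in> F \<Longrightarrow> density_on {..<d} (A f) \<and> density_on {..<d} (B f)"
  shows "separable d (\<lambda>r s. \<Sum>f\<in>F. of_real (w f) * tensor (A f) (B f) r s)"
proof -
  obtain h where h: "bij_betw h {..<card F} F"
    using ex_bij_betw_nat_finite[OF assms(1)] atLeast0LessThan by auto
  have h_in: "h k \<in> F" if "k < card F" for k
    using h that by (auto dest: bij_betwE)
  have "(\<Sum>k<card F. w (h k)) = 1"
    using sum.reindex_bij_betw[OF h, of w] assms(3) by simp
  moreover have "(\<lambda>r s. \<Sum>f\<in>F. of_real (w f) * tensor (A f) (B f) r s)
      = (\<lambda>r s. \<Sum>k<card F. of_real (w (h k)) * tensor (A (h k)) (B (h k)) r s)"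
    using sum.reindex_bij_betw[OF h, of "\<lambda>f. of_real (w f) * tensor (A f) (B f) _ _"] by simp
  ultimately show ?thesis
    unfolding separable_def using assms h_in
    by (intro exI[where x = "card F"] exI[where x = "w \<circ> h"] exI[where x = "A \<circ> h"] exI[where x = "B \<circ> h"]) auto
qed

lemma sum_i_power_orthogonality:
  fixes n m :: nat
  assumes "n \<le> 2" "m \<le> 2"
  shows "(\<Sum>t<4. \<i>^(t*n) * (-\<i>)^(t*m)) = (if n = m then 4 else 0)"
proof -
  have "(\<Sum>t<4. g t) = g 0 + g 1 + g 2 + g (3::nat)" for g :: "nat \<Rightarrow> complex"
    by (simp add: numeral_eq_Suc)
  moreover have "n \<in> {0, 1, 2}" "m \<in> {0, 1, 2}"
    using assms by auto
  ultimately show ?thesis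
    by (auto simp: power_mult_distrib power_mult[symmetric] numeral_eq_Suc)
qed

lemma sum_PiE_i_phases:
  fixes a b c e d :: nat
  assumes "a < d" "b < d" "c < d" "e < d"
  shows "(\<Sum>f\<in>PiE {..<d} (\<lambda>_. {..<4::nat}). \<i>^(f a) * \<i>^(f b) * cnj (\<i>^(f c)) * cnj (\<i>^(f e)))
     = (if (c = a \<and> e = b) \<or> (c = b \<and> e = a) then 4^d else 0)"
proof -
  define n :: "nat \<Rightarrow> nat" where "n i = of_bool (i = a) + of_bool (i = b)" for i
  define m :: "nat \<Rightarrow> nat" where "m i = of_bool (i = c) + of_bool (i = e)" for i
  have sum_n: "(\<Sum>i<d. f i * n i) = f a + f b" and sum_m: "(\<Sum>i<d. f i * m i) = f c + f e"
    for f :: "nat \<Rightarrow> nat"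
    using assms by (simp_all add: n_def m_def distrib_left sum.distrib)
  have factor: "\<i>^(f a) * \<i>^(f b) * cnj (\<i>^(f c)) * cnj (\<i>^(f e))
      = (\<Prod>i<d. \<i>^(f i * n i) * (-\<i>)^(f i * m i))" for f :: "nat \<Rightarrow> nat"
    by (simp add: prod.distrib power_sum[symmetric] sum_n sum_m power_add)
  have matching: "(\<forall>i<d. n i = m i) \<longleftrightarrow> (c = a \<and> e = b) \<or> (c = b \<and> e = a)"
    using assms unfolding n_def m_def by (auto simp: of_bool_def split: if_splits)
  have "(\<Sum>f\<in>PiE {..<d} (\<lambda>_. {..<4::nat}). \<i>^(f a) * \<i>^(f b) * cnj (\<i>^(f c)) * cnj (\<i>^(f e)))
      = (\<Prod>i<d. \<Sum>t<4. \<i>^(t * n i) * (-\<i>)^(t * m i))"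
    unfolding factor by (rule prod_sum_PiE[symmetric]) auto
  also have "\<dots> = (\<Prod>i<d. if n i = m i then 4 else 0)"
    by (intro prod.cong refl sum_i_power_orthogonality) (auto simp: n_def m_def)
  also have "\<dots> = (if \<forall>i<d. n i = m i then 4^d else 0)"
    by auto
  finally show ?thesis
    by (simp only: matching)
qed

lemma outer_Dket_apply:
  "outer (Dket i j) (Dket i j) (a, b) (c, e) =
     of_real ((of_bool (a = i \<and> b = j) + of_bool (a = j \<and> b = i)) *
              (of_bool (c = i \<and> e = j) + of_bool (c = j \<and> e = i)) / 2)"
proof -
  have ket: "ket2 p q (r, t) = of_real (of_bool (r = p \<and> t = q))" for p q r t
    by (simp add: ket2_def)
  have root: "complex_of_real (sqrt 2) * complex_of_real (sqrt 2) = 2"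
    by (simp flip: of_real_mult)
  show ?thesis
    unfolding outer_def Dket_def ket
    by (simp only: complex_cnj_divide complex_cnj_add complex_cnj_complex_of_real
        times_divide_times_eq root of_real_add of_real_mult of_real_divide of_real_numeral)
qed

lemma sum_upper_triangle_delta:
  fixes y :: "'a::comm_monoid_add" and d :: nat
  shows "(\<Sum>i<d. \<Sum>j\<in>{i<..<d}. if i = p \<and> j = q then y else 0) = (if p < q \<and> q < d then y else 0)"
proof -
  have "(\<Sum>j\<in>{i<..<d}. if i = p \<and> j = q then y else 0) = (if i = p then if p < q \<and> q < d then y else 0 else 0)" for i
    by (cases "i = p") (simp_all add: sum.delta)
  then show ?thesis by (simp add: sum.delta)
qed

lemma Iop_apply:
  "Iop d x (a, b) (c, e) = of_real (1 / (\<Sum>i<d. x i)^2) *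
     (if a < d \<and> b < d \<and> ((c = a \<and> e = b) \<or> (c = b \<and> e = a)) then of_real (x a * x b) else 0)"
proof -
  define Y :: complex where "Y = of_real (x a * x b * (of_bool (c = a \<and> e = b) + of_bool (c = b \<and> e = a)))"
  have diagonal: "(\<Sum>i<d. of_real ((x i)^2) * outer (ket2 i i) (ket2 i i) (a, b) (c, e))
     = (if a < d \<and> b = a \<and> c = a \<and> e = a then of_real ((x a)^2) else 0)"
  proof -
    have "of_real ((x i)^2) * outer (ket2 i i) (ket2 i i) (a, b) (c, e)
       = (if i = a then (if b = a \<and> c = a \<and> e = a then of_real ((x a)^2) else 0) else 0)" for i
      by (auto simp: outer_def ket2_def)
    then show ?thesis by (simp add: sum.delta)
  qed
  have "of_real (2 * x i * x j) * outer (Dket i j) (Dket i j) (a, b) (c, e)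
      = (if i = a \<and> j = b then Y else 0) + (if i = b \<and> j = a then Y else 0)" if "i < j" for i j
    using that by (auto simp: outer_Dket_apply Y_def)
  then have off_diagonal:
    "(\<Sum>i<d. \<Sum>j\<in>{i<..<d}. of_real (2 * x i * x j) * outer (Dket i j) (Dket i j) (a, b) (c, e))
     = (if a < b \<and> b < d then Y else 0) + (if b < a \<and> a < d then Y else 0)"
    by (simp add: sum.distrib sum_upper_triangle_delta)
  show ?thesis
    unfolding Iop_def prod.case diagonal off_diagonal
    by (cases a b rule: linorder_cases) (auto simp: Y_def power2_eq_square)
qed

definition phase_state :: "nat \<Rightarrow> (nat \<Rightarrow> real) \<Rightarrow> (nat \<Rightarrow> nat) \<Rightarrow> nat \<Rightarrow> complex" where
  "phase_state d x f a = (if a < d then of_real (sqrt (x a / (\<Sum>i<d. x i))) * \<i>^(f a) else 0)"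

lemma phase_state_norm:
  assumes "\<And>i. i < d \<Longrightarrow> x i \<ge> 0" "(\<Sum>i<d. x i) > 0"
  shows "(\<Sum>a<d. (cmod (phase_state d x f a))^2) = 1"
proof -
  have "(\<Sum>a<d. (cmod (phase_state d x f a))^2) = (\<Sum>a<d. x a / (\<Sum>i<d. x i))"
    using assms by (intro sum.cong refl) (simp add: phase_state_def norm_mult norm_power)
  also have "\<dots> = 1"
    using assms(2) by (simp flip: sum_divide_distrib)
  finally show ?thesis .
qed

lemma Iop_eq_phase_average:
  assumes "\<And>i. i < d \<Longrightarrow> x i \<ge> 0" "(\<Sum>i<d. x i) > 0"
  defines "\<psi> \<equiv> phase_state d x"
  shows "Iop d x = (\<lambda>r s. \<Sum>f\<in>PiE {..<d} (\<lambda>_. {..<4}).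
           of_real (1 / 4^d) * tensor (outer (\<psi> f) (\<psi> f)) (outer (\<psi> f) (\<psi> f)) r s)"
proof (intro ext)
  fix r q :: "nat \<times> nat"
  obtain a b c e where r: "r = (a, b)" and q: "q = (c, e)"
    by fastforce
  define total where "total = (\<Sum>i<d. x i)"
  show "Iop d x r q = (\<Sum>f\<in>PiE {..<d} (\<lambda>_. {..<4}).
           of_real (1 / 4^d) * tensor (outer (\<psi> f) (\<psi> f)) (outer (\<psi> f) (\<psi> f)) r q)"
  proof (cases "a < d \<and> b < d \<and> c < d \<and> e < d")
    case False
    then show ?thesis
      by (auto simp: r q Iop_apply tensor_def outer_def \<psi>_def phase_state_def)
  next
    case True
    define M where "M \<longleftrightarrow> (c = a \<and> e = b) \<or> (c = b \<and> e = a)"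
    define K where "K = sqrt (x a / total) * sqrt (x b / total) * sqrt (x c / total) * sqrt (x e / total)"
    have "total > 0"
      using assms(2) by (simp add: total_def)
    have K: "K = x a * x b / total^2" if M
    proof -
      have "K = (sqrt (x a / total))^2 * (sqrt (x b / total))^2"
        using that unfolding K_def M_def power2_eq_square by (auto simp: mult_ac)
      then show ?thesis
        using True assms(1) \<open>total > 0\<close> by (simp add: power_divide power2_eq_square)
    qed
    have "(\<Sum>f\<in>PiE {..<d} (\<lambda>_. {..<4}).
           of_real (1 / 4^d) * tensor (outer (\<psi> f) (\<psi> f)) (outer (\<psi> f) (\<psi> f)) r q)
        = of_real (K / 4^d) * (\<Sum>f\<in>PiE {..<d} (\<lambda>_. {..<4::nat}).
           \<i>^(f a) * \<i>^(f b) * cnj (\<i>^(f c)) * cnj (\<i>^(f e)))"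
      using True unfolding sum_distrib_left
      by (intro sum.cong refl) (simp add: r q tensor_def outer_def \<psi>_def phase_state_def K_def total_def mult_ac)
    also have "\<dots> = of_real (K / 4^d) * (if M then 4^d else 0)"
      using True by (subst sum_PiE_i_phases) (auto simp: M_def)
    also have "\<dots> = Iop d x r q"
      using True K \<open>total > 0\<close> by (cases M) (auto simp: r q Iop_apply M_def total_def)
    finally show ?thesis
      by (rule sym)
  qed
qed

theorem lemma2:
  fixes d :: nat and x :: "nat \<Rightarrow> real"
  assumes "d \<ge> 2"
    and "\<forall>i<d. x i \<ge> 0"
    and "\<exists>i<d. x i \<noteq> 0"
  shows "density_on ({..<d} \<times> {..<d}) (Iop d x) \<and> separable d (Iop d x)"
proof -
  have nonneg: "\<And>i. i < d \<Longrightarrow> x i \<ge> 0"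
    using assms(2) by blast
  have pos: "(\<Sum>i<d. x i) > 0"
    using assms(3) nonneg by (metis lessThan_iff finite_lessThan less_eq_real_def sum_pos2)
  define \<psi> where "\<psi> = phase_state d x"
  define F where "F = PiE {..<d} (\<lambda>_. {..<4::nat})"
  have F: "finite F" "(\<Sum>f\<in>F. 1 / 4^d :: real) = 1"
    by (simp_all add: F_def finite_PiE card_PiE)
  have support: "\<psi> f a = 0" if "a \<ge> d" for f a
    using that by (simp add: \<psi>_def phase_state_def)
  have unit: "(\<Sum>a<d. (cmod (\<psi> f a))^2) = 1" for f
    unfolding \<psi>_def using nonneg pos by (rule phase_state_norm)
  have factors: "density_on {..<d} (outer (\<psi> f) (\<psi> f))" for f
    using support unit by (intro density_on_outer) (auto simp: not_less)
  define \<rho> where "\<rho> = (\<lambda>r s. \<Sum>f\<in>F. of_real (1 / 4^d) *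
    tensor (outer (\<psi> f) (\<psi> f)) (outer (\<psi> f) (\<psi> f)) r s)"
  have "Iop d x = \<rho>"
    unfolding \<rho>_def F_def \<psi>_def by (rule Iop_eq_phase_average[OF nonneg pos])
  moreover have "density_on ({..<d} \<times> {..<d}) \<rho>"
    unfolding \<rho>_def by (rule density_on_sum_tensor_outer) (use F support unit in auto)
  moreover have "separable d \<rho>"
    unfolding \<rho>_def by (rule separable_sum_tensor) (use F factors in auto)
  ultimately show ?thesis
    by simp
qed

end
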